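(* Assume condition (B). Then the limit function $F(\lambda)=\lim_{n\to\infty}F_n(\lambda)$, $\lambda\ge0$, has the representation $$F(\lambda)=d\lambda+\int_0^\infty(1-e^{-\lambda u})\,\Lambda_2(du),$$ where $d\ge0$ and $\Lambda_2$ is a $\sigma$-finite measure on $(0,\infty)$ with $\int_0^\infty(1\wedge u)\,\Lambda_2(du)<\infty$.
   Context: For each $n\ge1$, let $\{\eta_n(k):k\ge1\}$ be i.i.d. $\mathbb N$-valued random variables with generating function $h_n(s)=E[s^{\eta_n(1)}]$. Let $(b_n)$ be positive numbers with $b_n\to\infty$. For $0\le\lambda\le b_n$ set $F_n(\lambda)=n[1-h_n(1-\lambda/b_n)]$. Condition (B): the sequence $(F_n)$ converges pointwise to a continuous function as $n\to\infty$. *)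

theory Defs
  imports "HOL-Probability.Probability"
begin

definition gen_fun :: "nat pmf \<Rightarrow> real \<Rightarrow> real" where
  "gen_fun p s = measure_pmf.expectation p (\<lambda>k. s ^ k)"

text \<open>F_n(lambda) = n [1 - h_n(1 - lambda/b_n)], where p n is the law of eta_n(1).\<close>
definition Fn :: "(nat \<Rightarrow> nat pmf) \<Rightarrow> (nat \<Rightarrow> real) \<Rightarrow> nat \<Rightarrow> real \<Rightarrow> real" where
  "Fn p b n l = real n * (1 - gen_fun (p n) (1 - l / b n))"

end

(*
  Let t = 1 - exp (- eta / b n) and K mu t = (1 - (1 - t) powr mu) / t. Then
    Gn mu := n E[1 - exp (- mu eta / b n)] = Fn (b n (1 - exp (- mu / b n))) = Gn 1 * E'[K mu t],
  where E' is taken under the law of t tilted by the density n t / Gn 1. Since Fn is monotone and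
  F continuous, Gn mu --> F mu. The tilted laws live on [0,1), so by Helly's selection theorem a
  subsequence converges weakly to some M, and since K mu is bounded and continuous,
  F mu = F 1 * (integral of K mu against M). The mass of M at 0 yields the drift (K mu 0 = mu), the
  mass at 1 vanishes because F is continuous at 0 with F 0 = 0, and the rest of M becomes the Levy
  measure under u = - ln (1 - t).
*)
theory Submission
  imports Defs "HOL-Real_Asymp.Real_Asymp"
begin

lemma integrable_power_pmf:
  fixes s :: real
  assumes "\<bar>s\<bar> \<le> 1"
  shows "integrable (measure_pmf q) (\<lambda>k. s ^ k)"
proof (rule measure_pmf.integrable_const_bound[where B=1])
  show "AE k in measure_pmf q. norm (s ^ k) \<le> 1"
    using assms by (auto simp: power_abs intro!: power_le_one)
qed simp

lemma gen_fun_mono: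
  fixes s t :: real
  assumes "0 \<le> s" "s \<le> t" "t \<le> 1"
  shows "gen_fun q s \<le> gen_fun q t"
  unfolding gen_fun_def
  by (rule integral_mono) (use assms in \<open>auto intro!: integrable_power_pmf power_mono\<close>)

lemma Fn_zero: "Fn p b n 0 = 0"
  by (simp add: Fn_def gen_fun_def)

lemma mono_on_Fn:
  assumes "b n > 0"
  shows "mono_on {0..b n} (Fn p b n)"
proof (rule mono_onI)
  fix x y assume "x \<in> {0..b n}" "y \<in> {0..b n}" "x \<le> y"
  then have "gen_fun (p n) (1 - y / b n) \<le> gen_fun (p n) (1 - x / b n)"
    using assms by (intro gen_fun_mono) (auto simp: field_simps)
  then show "Fn p b n x \<le> Fn p b n y"
    unfolding Fn_def by (intro mult_left_mono) auto
qed

lemma tendsto_mono_on_along: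
  fixes f :: "nat \<Rightarrow> real \<Rightarrow> real" and g :: "real \<Rightarrow> real"
  assumes mono: "eventually (\<lambda>n. mono_on {a..x} (f n)) sequentially"
    and conv: "\<And>y. y \<in> {a..x} \<Longrightarrow> (\<lambda>n. f n y) \<longlonglongrightarrow> g y"
    and cont: "continuous_on {a..x} g"
    and s_lim: "s \<longlonglongrightarrow> x" and s_in: "\<And>n. s n \<in> {a..x}"
  shows "(\<lambda>n. f n (s n)) \<longlonglongrightarrow> g x"
proof -
  have x: "x \<in> {a..x}"
    using s_in[of 0] by auto
  show ?thesis
  proof (rule order_tendstoI)
    fix e assume "g x < e"
    with conv[OF x] have "eventually (\<lambda>n. f n x < e) sequentially"
      by (rule order_tendstoD)
    then show "eventually (\<lambda>n. f n (s n) < e) sequentially"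
      using mono
    proof eventually_elim
      case (elim n)
      have "f n (s n) \<le> f n x" using mono_onD[OF elim(2)] s_in x by auto
      with elim(1) show ?case by simp
    qed
  next
    fix e assume "e < g x"
    have "(g \<longlongrightarrow> g x) (at x within {a..x})"
      using cont x by (simp add: continuous_on_def)
    from order_tendstoD(1)[OF this \<open>e < g x\<close>] obtain d where "d > 0"
      and d: "\<And>y. y \<in> {a..x} \<Longrightarrow> y \<noteq> x \<Longrightarrow> dist y x < d \<Longrightarrow> e < g y"
      unfolding eventually_at by blast
    define y where "y = max a (x - d / 2)"
    have y: "y \<in> {a..x}" using x \<open>d > 0\<close> by (auto simp: y_def)
    have "e < g y"
    proof (cases "y = x")
      case False
      then show ?thesis using d[OF y] \<open>d > 0\<close> y by (auto simp: y_def dist_real_def)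
    qed (use \<open>e < g x\<close> in simp)
    have "eventually (\<lambda>n. e < f n y) sequentially"
      using conv[OF y] \<open>e < g y\<close> by (rule order_tendstoD)
    moreover have "eventually (\<lambda>n. x - d / 2 < s n) sequentially"
      using s_lim \<open>d > 0\<close> by (intro order_tendstoD(1)) auto
    ultimately show "eventually (\<lambda>n. e < f n (s n)) sequentially"
      using mono
    proof eventually_elim
      case (elim n)
      have "f n y \<le> f n (s n)" using mono_onD[OF elim(3)] s_in y elim(2) by (auto simp: y_def)
      with elim(1) show ?case by simp
    qed
  qed
qed

definition Gn :: "(nat \<Rightarrow> nat pmf) \<Rightarrow> (nat \<Rightarrow> real) \<Rightarrow> nat \<Rightarrow> real \<Rightarrow> real" where
  "Gn p b n \<mu> = real n * measure_pmf.expectation (p n) (\<lambda>k. 1 - exp (- \<mu> * real k / b n))"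

lemma Gn_eq_Fn:
  assumes "b n > 0" "\<mu> \<ge> 0"
  shows "Gn p b n \<mu> = Fn p b n (b n * (1 - exp (- \<mu> / b n)))"
proof -
  have "\<bar>exp (- \<mu> / b n)\<bar> \<le> 1" using assms by simp
  then have "integrable (measure_pmf (p n)) (\<lambda>k. exp (- \<mu> / b n) ^ k)"
    by (rule integrable_power_pmf)
  moreover have "exp (- \<mu> * real k / b n) = exp (- \<mu> / b n) ^ k" for k
    by (simp add: exp_of_nat_mult[symmetric] mult.commute)
  ultimately have "measure_pmf.expectation (p n) (\<lambda>k. 1 - exp (- \<mu> * real k / b n))
      = 1 - gen_fun (p n) (exp (- \<mu> / b n))"
    by (simp add: gen_fun_def Bochner_Integration.integral_diff)
  then show ?thesis using assms by (simp add: Gn_def Fn_def)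
qed

lemma Gn_nonneg: "b n > 0 \<Longrightarrow> \<mu> \<ge> 0 \<Longrightarrow> Gn p b n \<mu> \<ge> 0"
  unfolding Gn_def by (intro mult_nonneg_nonneg integral_nonneg_AE) (auto simp: field_simps)

lemma Gn_tendsto:
  assumes b_pos: "\<And>n. b n > 0"
    and b_lim: "filterlim b at_top sequentially"
    and B_conv: "\<And>l. l \<ge> 0 \<Longrightarrow> (\<lambda>n. Fn p b n l) \<longlonglongrightarrow> F l"
    and B_cont: "continuous_on {0..} F"
    and "\<mu> \<ge> 0"
  shows "(\<lambda>n. Gn p b n \<mu>) \<longlonglongrightarrow> F \<mu>"
proof -
  define s where "s n = b n * (1 - exp (- \<mu> / b n))" for n
  have "((\<lambda>x. x * (1 - exp (- \<mu> / x))) \<longlongrightarrow> \<mu>) at_top"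
    using \<open>\<mu> \<ge> 0\<close> by real_asymp
  from filterlim_compose[OF this b_lim] have s_lim: "s \<longlonglongrightarrow> \<mu>"
    by (simp add: s_def[abs_def])
  have s_in: "s n \<in> {0..\<mu>}" for n
  proof -
    have "1 - exp (- \<mu> / b n) \<le> \<mu> / b n"
      using exp_ge_add_one_self[of "- \<mu> / b n"] by simp
    then have "s n \<le> b n * (\<mu> / b n)"
      using b_pos[of n] unfolding s_def by (intro mult_left_mono) simp_all
    moreover have "0 \<le> s n"
      using b_pos[of n] \<open>\<mu> \<ge> 0\<close> by (simp add: s_def)
    ultimately show ?thesis
      using b_pos[of n] by simp
  qed
  have mono: "eventually (\<lambda>n. mono_on {0..\<mu>} (Fn p b n)) sequentially"
    using filterlim_at_top[THEN iffD1, OF b_lim, rule_format, of \<mu>]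
    by eventually_elim (rule mono_on_subset[OF mono_on_Fn[OF b_pos]], simp)
  have "(\<lambda>n. Fn p b n (s n)) \<longlonglongrightarrow> F \<mu>"
    by (rule tendsto_mono_on_along[OF mono _ _ s_lim s_in])
       (auto intro: B_conv continuous_on_subset[OF B_cont])
  then show ?thesis
    using b_pos \<open>\<mu> \<ge> 0\<close> by (simp add: Gn_eq_Fn s_def)
qed

definition K :: "real \<Rightarrow> real \<Rightarrow> real" where
  "K \<mu> t = (if t \<le> 0 then \<mu> else if 1 \<le> t then 1 else (1 - (1 - t) powr \<mu>) / t)"

lemma K_eq_on_unit_interval: "0 < t \<Longrightarrow> t < 1 \<Longrightarrow> K \<mu> t = (1 - (1 - t) powr \<mu>) / t"
  by (simp add: K_def)

lemma K_mult: "0 \<le> t \<Longrightarrow> t < 1 \<Longrightarrow> t * K \<mu> t = 1 - (1 - t) powr \<mu>"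
  by (auto simp: K_def)

lemma K_measurable[measurable]: "K \<mu> \<in> borel_measurable borel"
  unfolding K_def[abs_def] by measurable

lemma isCont_eq_on_open:
  assumes "isCont g x" "open S" "x \<in> S" "\<And>t. t \<in> S \<Longrightarrow> f t = g t"
  shows "isCont f x"
proof -
  have "eventually (\<lambda>t. f t = g t) (nhds x)"
    using eventually_nhds_in_open[OF assms(2,3)] by eventually_elim (use assms(4) in auto)
  with isCont_cong assms(1) show ?thesis by blast
qed

lemma isCont_K_0:
  assumes "\<mu> > 0"
  shows "isCont (K \<mu>) 0"
  unfolding continuous_at_split
proof
  have "eventually (\<lambda>t. K \<mu> t = \<mu>) (at_left (0::real))"
    by (auto simp: K_def eventually_at_left_field intro!: exI[of _ "-1"])
  then show "continuous (at_left 0) (K \<mu>)"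
    unfolding continuous_within by (subst tendsto_cong) (auto simp: K_def)
next
  have "eventually (\<lambda>t. K \<mu> t = (1 - (1 - t) powr \<mu>) / t) (at_right (0::real))"
    by (auto simp: K_def eventually_at_right_field intro!: exI[of _ 1])
  moreover have "((\<lambda>t. (1 - (1 - t) powr \<mu>) / t) \<longlongrightarrow> \<mu>) (at_right 0)"
    using assms by real_asymp
  ultimately show "continuous (at_right 0) (K \<mu>)"
    unfolding continuous_within by (subst tendsto_cong) (auto simp: K_def)
qed

lemma isCont_K_1:
  assumes "\<mu> > 0"
  shows "isCont (K \<mu>) 1"
  unfolding continuous_at_split
proof
  have "eventually (\<lambda>t. K \<mu> t = (1 - (1 - t) powr \<mu>) / t) (at_left (1::real))"
    by (auto simp: K_def eventually_at_left_field intro!: exI[of _ 0])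
  moreover have "((\<lambda>t. (1 - (1 - t) powr \<mu>) / t) \<longlongrightarrow> 1) (at_left 1)"
    using assms by real_asymp
  ultimately show "continuous (at_left 1) (K \<mu>)"
    unfolding continuous_within by (subst tendsto_cong) (auto simp: K_def)
next
  have "eventually (\<lambda>t. K \<mu> t = 1) (at_right (1::real))"
    by (auto simp: K_def eventually_at_right_field intro!: exI[of _ 2])
  then show "continuous (at_right 1) (K \<mu>)"
    unfolding continuous_within by (subst tendsto_cong) (auto simp: K_def)
qed

lemma isCont_K:
  assumes "\<mu> > 0"
  shows "isCont (K \<mu>) x"
proof -
  consider "x < 0" | "x = 0" | "0 < x" "x < 1" | "x = 1" | "1 < x"
    by linarith
  then show ?thesis
  proof cases
    case 1
    have "isCont (\<lambda>_. \<mu>) x" by simp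
    then show ?thesis
      by (rule isCont_eq_on_open[where S="{..<0}"]) (use 1 in \<open>auto simp: K_def\<close>)
  next
    case 3
    then have "isCont (\<lambda>t. (1 - (1 - t) powr \<mu>) / t) x"
      by (intro continuous_intros) auto
    then show ?thesis
      by (rule isCont_eq_on_open[where S="{0<..<1}"]) (use 3 in \<open>auto simp: K_eq_on_unit_interval\<close>)
  next
    case 5
    have "isCont (\<lambda>_. 1) x" by simp
    then show ?thesis
      by (rule isCont_eq_on_open[where S="{1<..}"]) (use 5 in \<open>auto simp: K_def\<close>)
  qed (use isCont_K_0[OF assms] isCont_K_1[OF assms] in simp_all)
qed

lemma K_bounded:
  assumes "\<mu> > 0"
  obtains B where "\<And>t. norm (K \<mu> t) \<le> B"
proof -
  have "compact (K \<mu> ` {0..1})"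
    using isCont_K[OF assms] by (intro compact_continuous_image continuous_at_imp_continuous_on) auto
  then obtain B where B: "\<And>y. y \<in> K \<mu> ` {0..1} \<Longrightarrow> norm y \<le> B"
    using compact_imp_bounded bounded_iff by metis
  have "K \<mu> t \<in> K \<mu> ` {0..1}" for t
    by (rule image_eqI[of _ _ "min 1 (max 0 t)"]) (auto simp: K_def)
  then have "norm (K \<mu> t) \<le> B" for t
    using B by blast
  then show ?thesis using that by blast
qed

lemma abs_K_le_1:
  assumes "0 < \<mu>" "\<mu> \<le> 1" "0 < t" "t < 1"
  shows "\<bar>K \<mu> t\<bar> \<le> 1"
proof -
  have "(1 - t) powr 1 \<le> (1 - t) powr \<mu>"
    using assms by (intro powr_mono') auto
  moreover have "(1 - t) powr \<mu> \<le> (1 - t) powr 0"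
    using assms by (intro powr_mono') auto
  ultimately show ?thesis
    using assms by (simp add: K_def divide_le_eq)
qed

definition exp_squash :: "real \<Rightarrow> nat \<Rightarrow> real" where
  "exp_squash c k = 1 - exp (- real k / c)"

lemma exp_squash_bounds: "c > 0 \<Longrightarrow> 0 \<le> exp_squash c k \<and> exp_squash c k < 1"
  by (simp add: exp_squash_def)

lemma integrable_exp_squash:
  assumes "c > 0"
  shows "integrable (measure_pmf q) (exp_squash c)"
  using exp_squash_bounds[OF assms]
  by (intro measure_pmf.integrable_const_bound[where B=1]) (auto simp: abs_le_iff less_imp_le)

lemma Gn_one: "Gn p b n 1 = real n * measure_pmf.expectation (p n) (exp_squash (b n))"
  by (simp add: Gn_def exp_squash_def[abs_def])

text \<open>The tilting density is chosen to make \<open>Gn_eq_integral_K\<close> hold; in the degenerate case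
  \<open>Gn p b n 1 = 0\<close> any probability measure would do.\<close>
definition tilted_law :: "(nat \<Rightarrow> nat pmf) \<Rightarrow> (nat \<Rightarrow> real) \<Rightarrow> nat \<Rightarrow> real measure" where
  "tilted_law p b n = (if Gn p b n 1 > 0
     then density (distr (measure_pmf (p n)) borel (exp_squash (b n)))
       (\<lambda>t. ennreal (real n * t / Gn p b n 1))
     else return borel 0)"

lemma real_distribution_tilted_law:
  assumes "b n > 0"
  shows "real_distribution (tilted_law p b n)"
proof (cases "Gn p b n 1 > 0")
  case False
  then show ?thesis
    by (simp add: tilted_law_def real_distribution_def real_distribution_axioms_def prob_space_return)
next
  case True
  let ?m = "Gn p b n 1"
  let ?Q = "distr (measure_pmf (p n)) borel (exp_squash (b n))"
  have "emeasure (density ?Q (\<lambda>t. ennreal (real n * t / ?m))) UNIV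
      = (\<integral>\<^sup>+ k. ennreal (real n * exp_squash (b n) k / ?m) \<partial>measure_pmf (p n))"
    by (simp add: emeasure_density nn_integral_distr)
  also have "\<dots> = ennreal (\<integral> k. real n * exp_squash (b n) k / ?m \<partial>measure_pmf (p n))"
    using True exp_squash_bounds[OF assms]
    by (intro nn_integral_eq_integral) (auto intro!: integrable_exp_squash assms)
  also have "\<dots> = 1"
    using True unfolding integral_divide_zero integral_mult_right_zero Gn_one[symmetric] by simp
  finally show ?thesis
    using True by (auto simp: tilted_law_def real_distribution_def real_distribution_axioms_def intro!: prob_spaceI)
qed

lemma AE_tilted_law_in_unit_interval:
  assumes "b n > 0"
  shows "AE t in tilted_law p b n. t \<in> {0..<1}"
proof (cases "Gn p b n 1 > 0")
  case True
  then show ?thesis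
    unfolding tilted_law_def using exp_squash_bounds[OF assms]
    by (simp add: AE_density AE_distr_iff)
next
  case False
  then have degenerate: "tilted_law p b n = return borel 0"
    by (simp add: tilted_law_def)
  show ?thesis
    by (subst degenerate) (simp add: AE_return)
qed

lemma tight_tilted_law:
  assumes "\<And>n. b n > 0"
  shows "tight (tilted_law p b)"
proof -
  have "measure (tilted_law p b n) {-1<..1} = 1" for n
  proof -
    interpret real_distribution "tilted_law p b n"
      using real_distribution_tilted_law assms .
    have "AE t in tilted_law p b n. t \<in> {-1<..1}"
      using AE_tilted_law_in_unit_interval[where p=p, OF assms] by (rule AE_mp) (auto intro!: AE_I2)
    then show ?thesis
      by (subst AE_in_set_eq_1[symmetric]) auto
  qed
  then show ?thesis
    unfolding tight_def
  proof (intro conjI allI impI)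
    fix e :: real assume "e > 0"
    with \<open>\<And>n. measure (tilted_law p b n) {-1<..1} = 1\<close>
    show "\<exists>a c. a < c \<and> (\<forall>n. 1 - e < measure (tilted_law p b n) {a<..c})"
      by (intro exI[of _ "-1"] exI[of _ 1]) simp
  qed (use real_distribution_tilted_law assms in auto)
qed

lemma Gn_eq_integral_K:
  assumes "b n > 0" "\<mu> \<ge> 0"
  shows "Gn p b n \<mu> = Gn p b n 1 * (\<integral> t. K \<mu> t \<partial>tilted_law p b n)"
proof (cases "Gn p b n 1 > 0")
  case True
  let ?m = "Gn p b n 1"
  have K_squash: "exp_squash (b n) k * K \<mu> (exp_squash (b n) k) = 1 - exp (- \<mu> * real k / b n)" for k
    using exp_squash_bounds[OF assms(1), of k] assms
    by (simp add: K_mult exp_squash_def powr_def)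
  have "(\<integral> t. K \<mu> t \<partial>tilted_law p b n)
      = (\<integral> k. (real n / ?m) * (exp_squash (b n) k * K \<mu> (exp_squash (b n) k)) \<partial>measure_pmf (p n))"
    using True exp_squash_bounds[OF assms(1)]
    by (simp add: tilted_law_def integral_density integral_distr AE_distr_iff mult_ac)
  also have "\<dots> = (real n / ?m) * measure_pmf.expectation (p n) (\<lambda>k. 1 - exp (- \<mu> * real k / b n))"
    by (simp add: K_squash)
  finally show ?thesis
    using True by (simp add: Gn_def[of p b n \<mu>])
next
  case False
  then have "Gn p b n 1 = 0"
    using Gn_nonneg[of b n 1 p] assms by simp
  moreover have "Gn p b n \<mu> = 0"
  proof (cases "n = 0")
    case False
    with \<open>Gn p b n 1 = 0\<close> have "measure_pmf.expectation (p n) (exp_squash (b n)) = 0"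
      by (simp add: Gn_one)
    then have "AE k in measure_pmf (p n). exp_squash (b n) k = 0"
      using exp_squash_bounds[OF assms(1)] integrable_exp_squash[OF assms(1)]
      by (subst (asm) integral_nonneg_eq_0_iff_AE) (auto intro!: AE_I2)
    then have "AE k in measure_pmf (p n). 1 - exp (- \<mu> * real k / b n) = 0"
      by eventually_elim (use assms in \<open>auto simp: exp_squash_def\<close>)
    then show ?thesis
      by (simp add: Gn_def integral_eq_zero_AE)
  qed (simp add: Gn_def)
  ultimately show ?thesis by simp
qed

lemma K_representation_of_limit:
  assumes b_pos: "\<And>n. b n > 0"
    and b_lim: "filterlim b at_top sequentially"
    and B_conv: "\<And>l. l \<ge> 0 \<Longrightarrow> (\<lambda>n. Fn p b n l) \<longlonglongrightarrow> F l"
    and B_cont: "continuous_on {0..} F"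
  obtains M where "real_distribution M" "\<And>\<mu>. \<mu> > 0 \<Longrightarrow> F \<mu> = F 1 * (\<integral> t. K \<mu> t \<partial>M)"
proof -
  have Gn_lim: "(\<lambda>n. Gn p b n \<mu>) \<longlonglongrightarrow> F \<mu>" if "\<mu> \<ge> 0" for \<mu>
    using Gn_tendsto[OF b_pos b_lim B_conv B_cont that] .
  obtain r M where r: "strict_mono r" and M: "real_distribution M"
    and "weak_conv_m (tilted_law p b \<circ> id \<circ> r) M"
    using tight_imp_convergent_subsubsequence[OF tight_tilted_law[of b p, OF b_pos] strict_mono_id] by blast
  then have weak_conv: "weak_conv_m (\<lambda>j. tilted_law p b (r j)) M"
    by (simp add: comp_def)
  have "F \<mu> = F 1 * (\<integral> t. K \<mu> t \<partial>M)" if "\<mu> > 0" for \<mu>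
  proof -
    obtain B where "\<And>t. norm (K \<mu> t) \<le> B"
      using K_bounded[OF \<open>\<mu> > 0\<close>] by blast
    then have "(\<lambda>j. \<integral> t. K \<mu> t \<partial>tilted_law p b (r j)) \<longlonglongrightarrow> (\<integral> t. K \<mu> t \<partial>M)"
      using real_distribution_tilted_law[OF b_pos] M weak_conv isCont_K[OF \<open>\<mu> > 0\<close>]
      by (intro weak_conv_imp_integral_bdd_continuous_conv)
    with LIMSEQ_subseq_LIMSEQ[OF Gn_lim r]
    have "(\<lambda>j. Gn p b (r j) 1 * (\<integral> t. K \<mu> t \<partial>tilted_law p b (r j))) \<longlonglongrightarrow> F 1 * (\<integral> t. K \<mu> t \<partial>M)"
      by (intro tendsto_mult) (auto simp: comp_def)
    moreover have "Gn p b (r j) \<mu> = Gn p b (r j) 1 * (\<integral> t. K \<mu> t \<partial>tilted_law p b (r j))" for j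
      using \<open>\<mu> > 0\<close> by (intro Gn_eq_integral_K b_pos) simp
    with LIMSEQ_subseq_LIMSEQ[OF Gn_lim[of \<mu>] r] \<open>\<mu> > 0\<close>
    have "(\<lambda>j. Gn p b (r j) 1 * (\<integral> t. K \<mu> t \<partial>tilted_law p b (r j))) \<longlonglongrightarrow> F \<mu>"
      by (simp add: comp_def)
    ultimately show ?thesis
      by (rule LIMSEQ_unique[symmetric])
  qed
  with M show ?thesis using that by blast
qed

text \<open>The substitution \<open>u = -ln (1 - t)\<close> maps \<open>{0<..<1}\<close> onto \<open>{0<..}\<close> and turns \<open>K \<mu> t\<close> into
  \<open>(1 - exp (- \<mu> u)) / (1 - exp (- u))\<close>. The value off \<open>{0<..<1}\<close> is irrelevant but has to lie
  in \<open>{0<..}\<close>.\<close>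
definition neg_ln_compl :: "real \<Rightarrow> real" where
  "neg_ln_compl t = (if t \<in> {0<..<1} then - ln (1 - t) else 1)"

definition levy_measure :: "real measure \<Rightarrow> real \<Rightarrow> real measure" where
  "levy_measure M c = density (distr (density M (\<lambda>t. ennreal (indicator {0<..<1} t)))
       (restrict_space borel {0<..}) neg_ln_compl) (\<lambda>u. ennreal (c / (1 - exp (- u))))"

lemma neg_ln_compl_borel[measurable]: "neg_ln_compl \<in> borel_measurable borel"
  unfolding neg_ln_compl_def[abs_def] by measurable

lemma neg_ln_compl_measurable: "neg_ln_compl \<in> borel \<rightarrow>\<^sub>M restrict_space borel {0<..}"
  by (rule measurable_restrict_space2) (auto simp: neg_ln_compl_def)

lemma space_levy_measure: "space (levy_measure M c) = {0<..}"
  by (simp add: levy_measure_def space_restrict_space)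

lemma sets_levy_measure: "sets (levy_measure M c) = sets (restrict_space borel {0<..})"
  by (simp add: levy_measure_def)

lemma integral_levy_measure:
  assumes M: "sets M = sets borel" and "c \<ge> 0"
  shows "(\<integral> u. (1 - exp (- \<mu> * u)) \<partial>levy_measure M c) = c * (\<integral> t. indicator {0<..<1} t * K \<mu> t \<partial>M)"
proof -
  let ?P = "density M (\<lambda>t. ennreal (indicator {0<..<1} t))"
  let ?D = "distr ?P (restrict_space borel {0<..}) neg_ln_compl"
  have "(\<integral> u. (1 - exp (- \<mu> * u)) \<partial>levy_measure M c) = (\<integral> u. (c / (1 - exp (- u))) * (1 - exp (- \<mu> * u)) \<partial>?D)"
    unfolding levy_measure_def using \<open>c \<ge> 0\<close>
    by (subst integral_density) (auto intro!: AE_I2 simp: space_restrict_space measurable_restrict_space1)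
  also have "\<dots> = (\<integral> t. (c / (1 - exp (- neg_ln_compl t))) * (1 - exp (- \<mu> * neg_ln_compl t)) \<partial>?P)"
    using neg_ln_compl_measurable
    by (subst integral_distr) (auto simp: measurable_cong_sets[OF M refl] measurable_restrict_space1)
  also have "\<dots> = (\<integral> t. indicator {0<..<1} t * ((c / (1 - exp (- neg_ln_compl t))) * (1 - exp (- \<mu> * neg_ln_compl t))) \<partial>M)"
    by (subst integral_density) (auto simp: measurable_cong_sets[OF M refl])
  also have "\<dots> = (\<integral> t. c * (indicator {0<..<1} t * K \<mu> t) \<partial>M)"
  proof (rule Bochner_Integration.integral_cong[OF refl])
    fix t
    have "exp (- \<mu> * neg_ln_compl t) = (1 - t) powr \<mu>" if "t \<in> {0<..<1}"
      using that by (simp add: neg_ln_compl_def powr_def)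
    then show "indicator {0<..<1} t * ((c / (1 - exp (- neg_ln_compl t))) * (1 - exp (- \<mu> * neg_ln_compl t)))
        = c * (indicator {0<..<1} t * K \<mu> t)"
      by (cases "t \<in> {0<..<1}") (auto simp: neg_ln_compl_def K_def)
  qed
  finally show ?thesis
    by simp
qed

lemma sigma_finite_levy_measure:
  assumes "finite_measure M" and M: "sets M = sets borel"
  shows "sigma_finite_measure (levy_measure M c)"
proof -
  interpret M: finite_measure M by fact
  let ?P = "density M (\<lambda>t. ennreal (indicator {0<..<1} t))"
  let ?D = "distr ?P (restrict_space borel {0<..}) neg_ln_compl"
  have "emeasure ?P (space ?P) = (\<integral>\<^sup>+ t. indicator {0<..<1} t \<partial>M)"
    by (subst emeasure_density) (auto simp: measurable_cong_sets[OF M refl] ennreal_indicator)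
  also have "\<dots> = emeasure M {0<..<1}"
    using M by (intro nn_integral_indicator) simp
  finally have "finite_measure ?P"
    by (intro finite_measureI) (simp add: M.emeasure_finite)
  then have "finite_measure ?D"
    using neg_ln_compl_measurable
    by (intro finite_measure.finite_measure_distr) (simp_all add: measurable_cong_sets[OF M refl])
  then interpret D: finite_measure ?D .
  show ?thesis
    unfolding levy_measure_def
    by (subst D.sigma_finite_iff_density_finite) (auto simp: measurable_restrict_space1)
qed

lemma min_one_neg_ln_le:
  fixes t :: real
  assumes "0 < t" "t < 1"
  shows "min 1 (- ln (1 - t)) \<le> 2 * t"
proof (cases "t \<le> 1/2")
  case True
  have "- t - 2 * t\<^sup>2 \<le> ln (1 - t)"
    using ln_one_minus_pos_lower_bound[of t] True assms by simp
  moreover have "t\<^sup>2 \<le> t / 2"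
    using True assms by (simp add: power2_eq_square mult_left_le)
  ultimately show ?thesis by simp
qed simp

lemma nn_integral_min_one_levy_measure_finite:
  assumes "finite_measure M" and M: "sets M = sets borel" and "c \<ge> 0"
  shows "(\<integral>\<^sup>+ u. ennreal (min 1 u) \<partial>levy_measure M c) < \<infinity>"
proof -
  interpret M: finite_measure M by fact
  let ?P = "density M (\<lambda>t. ennreal (indicator {0<..<1} t))"
  let ?D = "distr ?P (restrict_space borel {0<..}) neg_ln_compl"
  let ?f = "\<lambda>t. ennreal (c / (1 - exp (- neg_ln_compl t))) * ennreal (min 1 (neg_ln_compl t))"
  have "(\<integral>\<^sup>+ u. ennreal (min 1 u) \<partial>levy_measure M c)
      = (\<integral>\<^sup>+ u. ennreal (c / (1 - exp (- u))) * ennreal (min 1 u) \<partial>?D)"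
    unfolding levy_measure_def by (subst nn_integral_density) (auto simp: measurable_restrict_space1)
  also have "\<dots> = (\<integral>\<^sup>+ t. ?f t \<partial>?P)"
    using neg_ln_compl_measurable
    by (subst nn_integral_distr) (auto simp: measurable_cong_sets[OF M refl] measurable_restrict_space1)
  also have "\<dots> = (\<integral>\<^sup>+ t. ennreal (indicator {0<..<1} t) * ?f t \<partial>M)"
    by (subst nn_integral_density) (auto simp: measurable_cong_sets[OF M refl])
  also have "\<dots> \<le> (\<integral>\<^sup>+ t. ennreal (2 * c) \<partial>M)"
  proof (rule nn_integral_mono)
    fix t
    show "ennreal (indicator {0<..<1} t) * ?f t \<le> ennreal (2 * c)"
    proof (cases "t \<in> {0<..<1}")
      case True
      then have "c / t * min 1 (- ln (1 - t)) \<le> c / t * (2 * t)"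
        using min_one_neg_ln_le \<open>c \<ge> 0\<close> by (intro mult_left_mono) auto
      then show ?thesis
        using True \<open>c \<ge> 0\<close> by (simp add: neg_ln_compl_def ennreal_mult[symmetric] ennreal_leI)
    qed simp
  qed
  also have "\<dots> < \<infinity>"
    using M.emeasure_finite[of "space M"] by (simp add: ennreal_mult_eq_top_iff less_top[symmetric])
  finally show ?thesis .
qed

lemma integral_K_decompose:
  assumes "real_distribution M" "\<mu> > 0"
  shows "(\<integral> t. K \<mu> t \<partial>M)
    = \<mu> * measure M {..0} + (\<integral> t. indicator {0<..<1} t * K \<mu> t \<partial>M) + measure M {1..}"
proof -
  interpret M: real_distribution M by fact
  obtain B where B: "\<And>t. norm (K \<mu> t) \<le> B"
    using K_bounded[OF \<open>\<mu> > 0\<close>] by blast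
  have int_left: "integrable M (\<lambda>t. \<mu> * indicator {..0} t)"
    by (intro M.integrable_const_bound[where B="\<bar>\<mu>\<bar>"]) (auto simp: indicator_def)
  have int_interior: "integrable M (\<lambda>t. indicator {0<..<1} t * K \<mu> t)"
    using B by (intro M.integrable_const_bound[where B=B]) (auto simp: indicator_def order_trans[OF _ B])
  have int_right: "integrable M (\<lambda>t. indicator {1..} t :: real)"
    by (intro M.integrable_const_bound[where B=1]) (auto simp: indicator_def)
  have "(\<integral> t. K \<mu> t \<partial>M)
      = (\<integral> t. \<mu> * indicator {..0} t + indicator {0<..<1} t * K \<mu> t + indicator {1..} t \<partial>M)"
    by (rule Bochner_Integration.integral_cong) (auto simp: K_def indicator_def)
  also have "\<dots> = (\<integral> t. \<mu> * indicator {..0} t \<partial>M) + (\<integral> t. indicator {0<..<1} t * K \<mu> t \<partial>M)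
      + (\<integral> t. indicator {1..} t \<partial>M)"
    by (subst Bochner_Integration.integral_add[OF Bochner_Integration.integrable_add[OF int_left int_interior] int_right],
        subst Bochner_Integration.integral_add[OF int_left int_interior]) (rule refl)
  finally show ?thesis
    by simp
qed

lemma integral_K_interior_tendsto_0:
  assumes "real_distribution M" and "s \<longlonglongrightarrow> 0" and "\<And>j. 0 < s j" and "\<And>j. s j \<le> 1"
  shows "(\<lambda>j. \<integral> t. indicator {0<..<1} t * K (s j) t \<partial>M) \<longlonglongrightarrow> 0"
proof -
  interpret M: real_distribution M by fact
  have "(\<lambda>j. \<integral> t. indicator {0<..<1} t * K (s j) t \<partial>M) \<longlonglongrightarrow> (\<integral> t. 0 \<partial>M)"
  proof (rule integral_dominated_convergence[where w="\<lambda>_. 1"])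
    show "AE t in M. (\<lambda>j. indicator {0<..<1} t * K (s j) t) \<longlonglongrightarrow> 0"
    proof (rule AE_I2)
      fix t
      show "(\<lambda>j. indicator {0<..<1} t * K (s j) t) \<longlonglongrightarrow> 0"
      proof (cases "t \<in> {0<..<1}")
        case True
        have "(\<lambda>j. (1 - (1 - t) powr s j) / t) \<longlonglongrightarrow> (1 - (1 - t) powr 0) / t"
          using True by (intro tendsto_intros assms(2)) auto
        then show ?thesis
          using True by (simp add: K_def)
      qed simp
    qed
    show "AE t in M. norm (indicator {0<..<1} t * K (s j) t) \<le> 1" for j
      using abs_K_le_1[OF assms(3,4)] by (intro AE_I2) (auto simp: indicator_def)
  qed auto
  then show ?thesis
    by simp
qed

lemma integral_K_tendsto_measure_at_one:
  assumes M: "real_distribution M" and s: "s \<longlonglongrightarrow> 0" "\<And>j. 0 < s j" "\<And>j. s j \<le> 1"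
  shows "(\<lambda>j. \<integral> t. K (s j) t \<partial>M) \<longlonglongrightarrow> measure M {1..}"
proof -
  have "(\<lambda>j. s j * measure M {..0} + (\<integral> t. indicator {0<..<1} t * K (s j) t \<partial>M) + measure M {1..})
      \<longlonglongrightarrow> 0 * measure M {..0} + 0 + measure M {1..}"
    by (intro tendsto_intros s(1) integral_K_interior_tendsto_0[OF M s])
  then show ?thesis
    by (simp add: integral_K_decompose[OF M s(2)])
qed

lemma levy_khintchine_of_K_representation:
  fixes F :: "real \<Rightarrow> real"
  assumes M: "real_distribution M" and "c \<ge> 0"
    and cont: "continuous_on {0..} F" and "F 0 = 0"
    and rep: "\<And>\<mu>. \<mu> > 0 \<Longrightarrow> F \<mu> = c * (\<integral> t. K \<mu> t \<partial>M)"
  shows "\<exists>(d::real) (\<Lambda>::real measure).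
           d \<ge> 0 \<and>
           space \<Lambda> = {0<..} \<and> sets \<Lambda> = sets (restrict_space borel {0<..}) \<and>
           sigma_finite_measure \<Lambda> \<and>
           (\<integral>\<^sup>+ u. ennreal (min 1 u) \<partial>\<Lambda>) < \<infinity> \<and>
           (\<forall>l\<ge>0. F l = d * l + (\<integral> u. (1 - exp (- l * u)) \<partial>\<Lambda>))"
proof -
  interpret M: real_distribution M by fact
  txt \<open>The mass of \<open>M\<close> at \<open>{1..}\<close> would make \<open>F\<close> jump at \<open>0\<close>.\<close>
  have "c * measure M {1..} = 0"
  proof -
    define s :: "nat \<Rightarrow> real" where "s j = inverse (real (Suc j))" for j
    have s: "s \<longlonglongrightarrow> 0" "\<And>j. 0 < s j" "\<And>j. s j \<le> 1"
      using LIMSEQ_inverse_real_of_nat by (auto simp: s_def[abs_def] inverse_le_1_iff)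
    have "(\<lambda>j. F (s j)) \<longlonglongrightarrow> F 0"
      using s by (intro continuous_on_tendsto_compose[OF cont]) (auto intro!: always_eventually less_imp_le)
    moreover have "(\<lambda>j. F (s j)) \<longlonglongrightarrow> c * measure M {1..}"
      unfolding rep[OF s(2)] by (intro tendsto_mult_left integral_K_tendsto_measure_at_one[OF M s])
    ultimately show ?thesis
      using \<open>F 0 = 0\<close> LIMSEQ_unique by metis
  qed
  then have F_levy: "F l = c * measure M {..0} * l + (\<integral> u. (1 - exp (- l * u)) \<partial>levy_measure M c)"
    if "l \<ge> 0" for l
  proof (cases "l = 0")
    case False
    with that have "F l = c * measure M {..0} * l + c * (\<integral> t. indicator {0<..<1} t * K l t \<partial>M)"
      using rep[of l] integral_K_decompose[OF M, of l] \<open>c * measure M {1..} = 0\<close>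
      by (simp add: algebra_simps)
    then show ?thesis
      using integral_levy_measure[OF M.events_eq_borel \<open>c \<ge> 0\<close>] by simp
  qed (simp add: \<open>F 0 = 0\<close>)
  show ?thesis
  proof (intro exI[of _ "c * measure M {..0}"] exI[of _ "levy_measure M c"] conjI allI impI)
    show "c * measure M {..0} \<ge> 0"
      using \<open>c \<ge> 0\<close> by simp
    show "sigma_finite_measure (levy_measure M c)"
      using M.finite_measure_axioms M.events_eq_borel by (rule sigma_finite_levy_measure)
    show "(\<integral>\<^sup>+ u. ennreal (min 1 u) \<partial>levy_measure M c) < \<infinity>"
      using M.finite_measure_axioms M.events_eq_borel \<open>c \<ge> 0\<close>
      by (rule nn_integral_min_one_levy_measure_finite)
  qed (simp_all add: space_levy_measure sets_levy_measure F_levy)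
qed

theorem lemma2p2:
  fixes p :: "nat \<Rightarrow> nat pmf" and b :: "nat \<Rightarrow> real" and F :: "real \<Rightarrow> real"
  assumes b_pos: "\<And>n. b n > 0"
    and b_lim: "filterlim b at_top sequentially"
    and B_conv: "\<And>l. l \<ge> 0 \<Longrightarrow> (\<lambda>n. Fn p b n l) \<longlonglongrightarrow> F l"
    and B_cont: "continuous_on {0..} F"
  shows "\<exists>(d::real) (\<Lambda>::real measure).
           d \<ge> 0 \<and>
           space \<Lambda> = {0<..} \<and> sets \<Lambda> = sets (restrict_space borel {0<..}) \<and>
           sigma_finite_measure \<Lambda> \<and>
           (\<integral>\<^sup>+ u. ennreal (min 1 u) \<partial>\<Lambda>) < \<infinity> \<and>
           (\<forall>l\<ge>0. F l = d * l + (\<integral> u. (1 - exp (- l * u)) \<partial>\<Lambda>))"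
proof -
  obtain M where M: "real_distribution M" and rep: "\<And>\<mu>. \<mu> > 0 \<Longrightarrow> F \<mu> = F 1 * (\<integral> t. K \<mu> t \<partial>M)"
    using K_representation_of_limit[OF b_pos b_lim B_conv B_cont] by blast
  have "F 1 \<ge> 0"
    using Gn_tendsto[OF b_pos b_lim B_conv B_cont, of 1] Gn_nonneg[OF b_pos, of 1]
    by (intro LIMSEQ_le_const) auto
  moreover have "F 0 = 0"
    using B_conv[of 0] by (simp add: Fn_zero LIMSEQ_const_iff)
  ultimately show ?thesis
    using levy_khintchine_of_K_representation[OF M _ B_cont _ rep] by blast
qed

end
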